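(* Suppose we have $2$ agents with additive, identical, normalized valuations, provided with a prediction of accuracy $\eta<1-\frac{1-a}{\min\{2a(2+a),4\}}$ for some given $a\in(\varphi-1,1]$, where $\varphi=\frac{1+\sqrt5}{2}$; that is, the allowed error between the prediction and the true valuation is $D=1-\eta>\frac{1-a}{\min\{2a(2+a),4\}}$. Then there is no online algorithm that guarantees an $a$-EFX allocation for all instances with error at most $D$, even when $T'=T=4$ and the prediction and the true valuation are $4$-value functions.
   Context: Online fair division with predictions and identical valuations: goods $g_1,\dots,g_T$ arrive one per time step; all agents share a true additive normalized valuation $v$ ($v(g_t)\ge0$, $\sum_{t\in[T]}v(g_t)=1$, $v(S)=\sum_{g\in S}v(g)$), and before any arrival the algorithm receives a prediction $p=(p(g_1),\dots,p(g_{T'}))$ (an additive normalized valuation over $T'$ predicted goods) and the accuracy level. Error $D'=\frac12\sum_{t=1}^{\max\{T,T'\}}|p(g_t)-v(g_t)|$ (missing entries set to $0$); accuracy $\eta$ means the error is at most $1-\eta$. At time $t$, $v(g_t)$ is revealed and $g_t$ must be irrevocably allocated. For $S\ne\emptyset$, $\bar S=S\setminus\{g\}$ with $g\in\arg\max_{g'\in S}v(S\setminus\{g'\})$, $\bar\emptyset=\emptyset$. An allocation is $a$-EFX if $v(A_i)\ge a\cdot v(\bar A_j)$ for all $i,j$. A function is $k$-value if it takes at most $k$ distinct values. *)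

theory Defs
  imports Complex_Main
begin

text \<open>Goods are indexed 0,...,T-1. A valuation is a function nat => real, only
its values on {..<T} matter.\<close>

definition normalized_val :: "nat \<Rightarrow> (nat \<Rightarrow> real) \<Rightarrow> bool" where
  "normalized_val T v \<longleftrightarrow> (\<forall>t<T. 0 \<le> v t) \<and> (\<Sum>t<T. v t) = 1"

definition k_value :: "nat \<Rightarrow> nat \<Rightarrow> (nat \<Rightarrow> real) \<Rightarrow> bool" where
  "k_value k T v \<longleftrightarrow> card (v ` {..<T}) \<le> k"

text \<open>Prediction error D' for T = T' (no missing entries).\<close>
definition pred_error :: "nat \<Rightarrow> (nat \<Rightarrow> real) \<Rightarrow> (nat \<Rightarrow> real) \<Rightarrow> real" where
  "pred_error T p v = (1/2) * (\<Sum>t<T. \<bar>p t - v t\<bar>)"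

definition setv :: "(nat \<Rightarrow> real) \<Rightarrow> nat set \<Rightarrow> real" where
  "setv v S = (\<Sum>g\<in>S. v g)"

definition bar :: "(nat \<Rightarrow> real) \<Rightarrow> nat set \<Rightarrow> nat set" where
  "bar v S = (if S = {} then {} else
     S - {SOME g. g \<in> S \<and> (\<forall>g'\<in>S. setv v (S - {g'}) \<le> setv v (S - {g}))})"

definition a_EFX :: "real \<Rightarrow> (nat \<Rightarrow> real) \<Rightarrow> 'ag set \<Rightarrow> ('ag \<Rightarrow> nat set) \<Rightarrow> bool" where
  "a_EFX a v Ag A \<longleftrightarrow> (\<forall>i\<in>Ag. \<forall>j\<in>Ag. setv v (A i) \<ge> a * setv v (bar v (A j)))"

text \<open>A deterministic online algorithm for two agents (True/False), given the
prediction p and, at time t, the revealed values [v g_0, ..., v g_t], chooses the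
agent receiving g_t.\<close>
definition online_bundle ::
  "((nat \<Rightarrow> real) \<Rightarrow> real list \<Rightarrow> bool) \<Rightarrow> nat \<Rightarrow> (nat \<Rightarrow> real) \<Rightarrow> (nat \<Rightarrow> real) \<Rightarrow> bool \<Rightarrow> nat set" where
  "online_bundle alg T p v i = {t. t < T \<and> alg p (map v [0..<Suc t]) = i}"

definition golden_ratio :: real where
  "golden_ratio = (1 + sqrt 5) / 2"

end

theory Submission
  imports Defs
begin

(* The adversary reveals goods of values x and y. If the algorithm gives both to the same agent,
   the last two goods are worth c each (the even fork); otherwise they are worth c - y and c + y
   (the spread fork). Both completions are within error y/2 of the prediction
   (x, y, c - y/2, c + y/2), and for every placement of the last two goods some agent values its
   bundle below a times the other bundle minus one good. The required inequalities on x, y, c can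
   be met with y/2 arbitrarily close to (1 - a) / min (2 a (2 + a)) 4; the bound a^2 + a > 1,
   i.e. a > golden_ratio - 1, is what keeps x = 1 - y - 2 c nonnegative while x + y < a c. *)

lemma golden_ratio_gt_three_halves: "3/2 < golden_ratio"
proof -
  have "2 < sqrt 5" by (simp add: real_less_rsqrt)
  then show ?thesis unfolding golden_ratio_def by simp
qed

lemma sq_add_self_golden_ratio_minus_one: "(golden_ratio - 1)^2 + (golden_ratio - 1) = 1"
  unfolding golden_ratio_def by (simp add: power2_eq_square field_simps)

lemma one_less_sq_add_self:
  fixes a :: real
  assumes "golden_ratio - 1 < a"
  shows "1 < a^2 + a"
proof -
  have "(golden_ratio - 1)^2 < a^2"
    using assms golden_ratio_gt_three_halves by (intro power_strict_mono) auto
  then show ?thesis using assms sq_add_self_golden_ratio_minus_one by linarith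
qed

lemma setv_remove_le_setv_bar:
  assumes "finite S" "g \<in> S"
  shows "setv v (S - {g}) \<le> setv v (bar v S)"
proof -
  let ?f = "\<lambda>g. setv v (S - {g})"
  let ?P = "\<lambda>g. g \<in> S \<and> (\<forall>g'\<in>S. setv v (S - {g'}) \<le> setv v (S - {g}))"
  have "Max (?f ` S) \<in> ?f ` S" using assms by (intro Max_in) auto
  then obtain g0 where "g0 \<in> S" "?f g0 = Max (?f ` S)" by auto
  then have "\<exists>g. ?P g" using assms(1) by auto
  then have "?P (SOME g. ?P g)" by (rule someI_ex)
  moreover have "bar v S = S - {SOME g. ?P g}" using assms(2) by (auto simp: bar_def)
  ultimately show ?thesis using assms(2) by simp
qed

lemma not_a_EFX_if_envy_after_removal:
  assumes "0 \<le> a" "i \<in> Ag" "j \<in> Ag" "finite (A j)" "g \<in> A j"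
    and "setv v (A i) < a * setv v (A j - {g})"
  shows "\<not> a_EFX a v Ag A"
proof
  assume "a_EFX a v Ag A"
  then have "a * setv v (bar v (A j)) \<le> setv v (A i)" using assms(2,3) by (auto simp: a_EFX_def)
  moreover have "a * setv v (A j - {g}) \<le> a * setv v (bar v (A j))"
    using setv_remove_le_setv_bar[OF assms(4,5)] assms(1) by (rule mult_left_mono)
  ultimately show False using assms(6) by linarith
qed

lemma setv_decision_bundle:
  "setv v {t. t < T \<and> dec t = k} = (\<Sum>t<T. if dec t = k then v t else 0)"
proof -
  have "{t. t < T \<and> dec t = k} = {t \<in> {..<T}. dec t = k}" by auto
  then show ?thesis unfolding setv_def by (simp only:) (rule sum.inter_filter, simp)
qed

lemma not_a_EFX_decisions:
  fixes dec :: "nat \<Rightarrow> 'ag"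
  assumes "0 \<le> a" "g < T" "dec g = j"
    and "(\<Sum>t<T. if dec t = i then v t else 0) < a * ((\<Sum>t<T. if dec t = j then v t else 0) - v g)"
  shows "\<not> a_EFX a v UNIV (\<lambda>k. {t. t < T \<and> dec t = k})"
proof (rule not_a_EFX_if_envy_after_removal[where g = g])
  have "setv v ({t. t < T \<and> dec t = j} - {g}) = setv v {t. t < T \<and> dec t = j} - v g"
    using assms(2,3) by (simp add: setv_def sum_diff1)
  then show "setv v {t. t < T \<and> dec t = i} < a * setv v ({t. t < T \<and> dec t = j} - {g})"
    using assms(1,4) by (simp add: setv_decision_bundle)
qed (use assms in auto)

lemma even_fork_not_a_EFX:
  fixes dec :: "nat \<Rightarrow> bool"
  assumes "0 < a" "0 \<le> x" "0 \<le> y" "c < a * (y + c)" "x + y < a * c" "dec 1 = dec 0"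
  shows "\<not> a_EFX a ((!) [x, y, c, c]) UNIV (\<lambda>k. {t. t < 4 \<and> dec t = k})"
proof -
  have "0 < a * c" using assms(2,3,5) by linarith
  then have "0 < c" using assms(1) by (simp add: zero_less_mult_iff)
  consider "dec 2 = dec 0" "dec 3 = dec 0" | "dec 2 \<noteq> dec 3" | "dec 2 \<noteq> dec 0" "dec 3 \<noteq> dec 0"
    by blast
  then show ?thesis
  proof cases
    case 1
    then show ?thesis
      by (intro not_a_EFX_decisions[where g = 0 and i = "\<not> dec 0"])
        (use assms \<open>0 < c\<close> in \<open>auto simp: eval_nat_numeral\<close>)
  next
    case 2
    then show ?thesis
      by (intro not_a_EFX_decisions[where g = 0 and i = "\<not> dec 0"])
        (use assms in \<open>auto simp: eval_nat_numeral\<close>)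
  next
    case 3
    then show ?thesis
      by (intro not_a_EFX_decisions[where g = 2 and i = "dec 0"])
        (use assms in \<open>auto simp: eval_nat_numeral\<close>)
  qed
qed

lemma spread_fork_not_a_EFX:
  fixes dec :: "nat \<Rightarrow> bool"
  assumes "0 < a" "0 \<le> x" "0 \<le> y" "c < a * (y + c)" "x + y < a * c" "x + c - y < a * (y + c)"
    and "dec 1 \<noteq> dec 0"
  shows "\<not> a_EFX a ((!) [x, y, c - y, c + y]) UNIV (\<lambda>k. {t. t < 4 \<and> dec t = k})"
proof -
  have "0 < a * c" using assms(2,3,5) by linarith
  then have two_c: "x < a * (2 * c)" "y < a * (2 * c)" using assms(2,3,5) by auto
  consider "dec 2 = dec 0" "dec 3 = dec 0" | "dec 2 = dec 0" "dec 3 \<noteq> dec 0"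
    | "dec 2 \<noteq> dec 0" "dec 3 = dec 0" | "dec 2 \<noteq> dec 0" "dec 3 \<noteq> dec 0"
    by blast
  then show ?thesis
  proof cases
    case 1
    then show ?thesis
      by (intro not_a_EFX_decisions[where g = 0 and i = "\<not> dec 0"])
        (use assms two_c in \<open>auto simp: eval_nat_numeral\<close>)
  next
    case 2
    then show ?thesis
      by (intro not_a_EFX_decisions[where g = 1 and i = "dec 0"])
        (use assms in \<open>auto simp: eval_nat_numeral algebra_simps\<close>)
  next
    case 3
    then show ?thesis
      by (intro not_a_EFX_decisions[where g = 0 and i = "\<not> dec 0"])
        (use assms in \<open>auto simp: eval_nat_numeral add.commute\<close>)
  next
    case 4
    then show ?thesis
      by (intro not_a_EFX_decisions[where g = 1 and i = "dec 0"])
        (use assms two_c in \<open>auto simp: eval_nat_numeral\<close>)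
  qed
qed

lemma online_fork_not_a_EFX:
  assumes "0 < a" "0 \<le> x" "0 \<le> y" "c < a * (y + c)" "x + y < a * c" "x + c - y < a * (y + c)"
  shows "\<exists>v \<in> {(!) [x, y, c, c], (!) [x, y, c - y, c + y]}.
           \<not> a_EFX a v UNIV (online_bundle alg 4 p v)"
proof (cases "alg p [x, y] = alg p [x]")
  case True
  let ?v = "(!) [x, y, c, c]"
  have "\<not> a_EFX a ?v UNIV (\<lambda>k. {t. t < 4 \<and> alg p (map ?v [0..<Suc t]) = k})"
    by (rule even_fork_not_a_EFX) (use assms True in \<open>simp_all add: upt_rec\<close>)
  then show ?thesis unfolding online_bundle_def by auto
next
  case False
  let ?v = "(!) [x, y, c - y, c + y]"
  have "\<not> a_EFX a ?v UNIV (\<lambda>k. {t. t < 4 \<and> alg p (map ?v [0..<Suc t]) = k})"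
    by (rule spread_fork_not_a_EFX) (use assms False in \<open>simp_all add: upt_rec\<close>)
  then show ?thesis unfolding online_bundle_def by auto
qed

lemma fork_weight_exists:
  fixes a D :: real
  assumes "golden_ratio - 1 < a" "a \<le> 1" "(1 - a) / min (2 * a * (2 + a)) 4 < D"
  shows "\<exists>w. 1/2 \<le> w \<and> (1 + a) * w \<le> 1 \<and> 1 < a * (2 + a) * w \<and> (1 - a) * w < 2 * D"
proof -
  have sq: "1 < a^2 + a" using assms(1) by (rule one_less_sq_add_self)
  have "0 < a" using assms(1) golden_ratio_gt_three_halves by linarith
  (* (1 - a) u / 2 is exactly the error threshold. u meets every constraint except possibly the
     strict 1 < a (2 + a) u; moving a little towards hi = 1 / (1 + a), where that inequality is
     strict by sq, repairs it. *)
  define u where "u = 2 / min (2 * a * (2 + a)) 4"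
  define hi where "hi = 1 / (1 + a)"
  have u: "1/2 \<le> u" "1 \<le> a * (2 + a) * u" "u \<le> hi" "(1 - a) * u < 2 * D"
    using \<open>0 < a\<close> sq assms(2,3)
    by (auto simp: u_def hi_def min_def field_simps power2_eq_square)
  have hi: "1 < a * (2 + a) * hi" using sq \<open>0 < a\<close> by (simp add: hi_def field_simps power2_eq_square)
  define slack where "slack = 2 * D - (1 - a) * u"
  define t where "t = min 1 (slack / 2)"
  have "0 < slack" using u(4) by (simp add: slack_def)
  then have t: "0 < t" "t \<le> 1" "t < slack" by (auto simp: t_def min_less_iff_disj)
  define w where "w = (1 - t) * u + t * hi"
  have "hi \<le> 1" using \<open>0 < a\<close> by (simp add: hi_def)
  then have "(1 - a) * (hi - u) \<le> 1" using \<open>0 < a\<close> u(1,3) by (intro mult_le_one) auto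
  then have "t * ((1 - a) * (hi - u)) \<le> t" using t(1) by (intro mult_left_le) auto
  moreover have "(1 - a) * w = (1 - a) * u + t * ((1 - a) * (hi - u))"
    by (simp add: w_def algebra_simps)
  ultimately have "(1 - a) * w \<le> (1 - a) * u + t" by linarith
  have "0 \<le> t * (hi - u)" "0 \<le> (1 - t) * (hi - u)" using t u(3) by simp_all
  moreover have "w = u + t * (hi - u)" "w = hi - (1 - t) * (hi - u)"
    by (simp_all add: w_def algebra_simps)
  ultimately have "u \<le> w" "w \<le> hi" by linarith+
  show ?thesis
  proof (intro exI conjI)
    show "1/2 \<le> w" "(1 + a) * w \<le> 1"
      using \<open>u \<le> w\<close> \<open>w \<le> hi\<close> u(1) \<open>0 < a\<close> by (auto simp: hi_def field_simps)
    have "a * (2 + a) * w = (1 - t) * (a * (2 + a) * u) + t * (a * (2 + a) * hi)"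
      by (simp add: w_def algebra_simps)
    also have "\<dots> > (1 - t) * 1 + t * 1"
      using t u(2) hi by (intro add_le_less_mono mult_left_mono mult_strict_left_mono) auto
    finally show "1 < a * (2 + a) * w" by simp
    show "(1 - a) * w < 2 * D" using \<open>(1 - a) * w \<le> (1 - a) * u + t\<close> t(3) slack_def by linarith
  qed
qed

lemma fork_values_exist:
  fixes a D :: real
  assumes "golden_ratio - 1 < a" "a \<le> 1" "(1 - a) / min (2 * a * (2 + a)) 4 < D"
  shows "\<exists>x y c. 0 \<le> x \<and> 0 < y \<and> y \<le> c \<and> x + y + 2 * c = 1 \<and> y \<le> 2 * D \<and>
           c < a * (y + c) \<and> x + y < a * c \<and> x + c - y < a * (y + c)"
proof -
  obtain w where w: "1/2 \<le> w" "(1 + a) * w \<le> 1" "1 < a * (2 + a) * w" "(1 - a) * w < 2 * D"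
    using fork_weight_exists[OF assms] by blast
  have "1/2 < a" using assms(1) golden_ratio_gt_three_halves by linarith
  define gap where "gap = a * (2 + a) * w - 1"
  define \<eta> where "\<eta> = min (gap / (2 * (2 + a))) (min ((2 * a - 1) * w / 3) (D - (1 - a) * w / 2))"
  have "0 < gap" "0 < (2 * a - 1) * w" "0 < D - (1 - a) * w / 2"
    using w \<open>1/2 < a\<close> by (simp_all add: gap_def)
  then have "0 < \<eta>" using \<open>1/2 < a\<close> by (simp add: \<eta>_def)
  have \<eta>_le: "\<eta> \<le> gap / (2 * (2 + a))" "\<eta> \<le> (2 * a - 1) * w / 3" "\<eta> \<le> D - (1 - a) * w / 2"
    unfolding \<eta>_def by (meson min.cobounded1 min.cobounded2 order.trans)+
  have "(2 + a) * \<eta> \<le> (2 + a) * (gap / (2 * (2 + a)))"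
    using \<eta>_le(1) \<open>1/2 < a\<close> by (intro mult_left_mono) auto
  also have "\<dots> = gap / 2" using \<open>1/2 < a\<close> by (simp add: field_simps)
  finally have "(2 + a) * \<eta> < a * (2 + a) * w - 1" using \<open>0 < gap\<close> by (simp add: gap_def)
  with \<open>0 < \<eta>\<close> \<eta>_le have \<eta>: "0 < \<eta>" "(2 + a) * \<eta> < a * (2 + a) * w - 1"
    "3 * \<eta> \<le> (2 * a - 1) * w" "2 * \<eta> \<le> 2 * D - (1 - a) * w"
    by linarith+
  (* At \<eta> = 0 these values satisfy c = a (y + c) exactly; \<eta> > 0 makes that inequality strict. *)
  show ?thesis
  proof (intro exI conjI)
    let ?x = "1 - (1 + a) * w" and ?y = "(1 - a) * w + 2 * \<eta>" and ?c = "a * w - \<eta>"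
    show "0 \<le> ?x" "?x + ?y + 2 * ?c = 1" using w by (simp_all add: algebra_simps)
    have "0 \<le> (1 - a) * w" using w(1) assms(2) by simp
    then show "0 < ?y" using \<eta>(1) by simp
    show "?y \<le> ?c" "?y \<le> 2 * D" using \<eta> by (simp_all add: algebra_simps)
    have "a * (?y + ?c) - ?c = (1 + a) * \<eta>" by (simp add: algebra_simps)
    moreover have "0 < (1 + a) * \<eta>" using \<eta>(1) \<open>1/2 < a\<close> by simp
    ultimately show "?c < a * (?y + ?c)" by linarith
    show "?x + ?y < a * ?c" using \<eta>(2) by (simp add: algebra_simps)
    have "a * (?y + ?c) - (?x + ?c - ?y) = (2 * w - 1) + (3 + a) * \<eta>" by (simp add: algebra_simps)
    moreover have "0 < (3 + a) * \<eta>" using \<eta>(1) \<open>1/2 < a\<close> by simp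
    ultimately show "?x + ?c - ?y < a * (?y + ?c)" using w(1) by linarith
  qed
qed

lemma normalized_val_four:
  "normalized_val 4 ((!) [v0, v1, v2, v3]) \<longleftrightarrow>
     0 \<le> v0 \<and> 0 \<le> v1 \<and> 0 \<le> v2 \<and> 0 \<le> v3 \<and> v0 + v1 + v2 + v3 = 1"
  by (auto simp: normalized_val_def eval_nat_numeral less_Suc_eq add.assoc)

lemma pred_error_four:
  "pred_error 4 ((!) [p0, p1, p2, p3]) ((!) [v0, v1, v2, v3]) =
     (\<bar>p0 - v0\<bar> + \<bar>p1 - v1\<bar> + \<bar>p2 - v2\<bar> + \<bar>p3 - v3\<bar>) / 2"
  by (simp add: pred_error_def eval_nat_numeral add.assoc)

lemma k_value_self: "k_value T T v"
  using card_image_le[of "{..<T}" v] by (simp add: k_value_def)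

theorem theorem4p6:
  fixes a D :: real
  assumes "golden_ratio - 1 < a" and "a \<le> 1"
    and "D > (1 - a) / min (2 * a * (2 + a)) 4"
  shows "\<forall>alg :: (nat \<Rightarrow> real) \<Rightarrow> real list \<Rightarrow> bool.
           \<exists>p v :: nat \<Rightarrow> real.
             normalized_val 4 p \<and> normalized_val 4 v \<and>
             k_value 4 4 p \<and> k_value 4 4 v \<and>
             pred_error 4 p v \<le> D \<and>
             \<not> a_EFX a v UNIV (online_bundle alg 4 p v)"
proof
  fix alg :: "(nat \<Rightarrow> real) \<Rightarrow> real list \<Rightarrow> bool"
  obtain x y c where xyc: "0 \<le> x" "0 < y" "y \<le> c" "x + y + 2 * c = 1" "y \<le> 2 * D"
    and ineqs: "c < a * (y + c)" "x + y < a * c" "x + c - y < a * (y + c)"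
    using fork_values_exist[OF assms] by blast
  have "0 < a" using assms(1) golden_ratio_gt_three_halves by linarith
  define p where "p = (!) [x, y, c - y / 2, c + y / 2]"
  obtain v where v: "v \<in> {(!) [x, y, c, c], (!) [x, y, c - y, c + y]}"
    and not_EFX: "\<not> a_EFX a v UNIV (online_bundle alg 4 p v)"
    using online_fork_not_a_EFX[OF \<open>0 < a\<close> xyc(1) _ ineqs] xyc(2) by fastforce
  have "normalized_val 4 p" using xyc by (simp add: p_def normalized_val_four)
  moreover have "normalized_val 4 v" "pred_error 4 p v \<le> D"
    using v xyc by (auto simp: p_def normalized_val_four pred_error_four)
  ultimately show "\<exists>p v. normalized_val 4 p \<and> normalized_val 4 v \<and> k_value 4 4 p \<and>
      k_value 4 4 v \<and> pred_error 4 p v \<le> D \<and> \<not> a_EFX a v UNIV (online_bundle alg 4 p v)"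
    using not_EFX k_value_self by blast
qed

end
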